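(* Let $\Gamma$ be an admissible parabolic graph (for a fixed $D\ge2$), let $d$ be the degree of a parabolic component of $\Gamma$, and let $\Sigma$ be an elliptic (i.e. non-affine Dynkin) component of $\Gamma$. Then $d\notin\operatorname{ds}\Sigma$. If $\Gamma$ is saturated, then also $d-1\notin\operatorname{ds}\Sigma$.
   Context: Graphs are finite, simple. $\mathbb{Z}\Gamma$ is the lattice freely generated by the vertices with $v^2=-2$, $u\cdot v=1$ if adjacent, $0$ otherwise. $\mathcal{F}_h(\Gamma)=(\mathbb{Z}\Gamma\oplus\mathbb{Z}h)/\ker$, with $h^2=2D$ and $v\cdot h=1$ for all vertices. $\Gamma$ is parabolic if $\mathbb{Z}\Gamma\otimes\mathbb{R}$ is negative semidefinite and degenerate; its components are simply laced Dynkin diagrams (elliptic components) and affine Dynkin diagrams (parabolic components, at least one). For an affine Dynkin diagram $\Sigma'$ with $\ker\mathbb{Z}\Sigma'$ generated by $k_{\Sigma'}=\sum n_vv$, $n_v>0$, its degree is $\sum n_v$. For a Dynkin diagram $\Sigma$, the degree set $\operatorname{ds}\Sigma$ is the set of coefficient sums $\sum m_v$ of all positive roots $\sum m_vv\in\mathbb{Z}\Sigma$ (e.g. $\operatorname{ds}\mathbf A_p=\{1,\dots,p\}$, $\operatorname{ds}\mathbf D_q=\{1,\dots,2q-3\}$, $\operatorname{ds}\mathbf E_6=\{1,\dots,11\}$, $\operatorname{ds}\mathbf E_7=\{1,\dots,13,17\}$, $\operatorname{ds}\mathbf E_8=\{1,\dots,16,23\}$). A $2D$-polarized lattice $(S,h)$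 is admissible if it has no $e$ with $e^2=-2$, $e\cdot h=0$, nor $e$ with $e^2=0$, $e\cdot h=2$; $\Gamma$ is admissible if $\mathcal{F}_h(\Gamma)$ is (in particular it has positive inertia index $1$). For a polarized lattice, its set of lines is $\{v: v^2=-2, v\cdot h=1\}$, viewed as a graph with $u,v$ adjacent iff $u\cdot v=1$; $\Gamma$ is saturated if $\Gamma$ equals the set of lines of $\mathcal{F}_h(\Gamma)$. *)

theory Defs
  imports Complex_Main
begin

definition simple_graph :: "'a set \<Rightarrow> ('a \<Rightarrow> 'a \<Rightarrow> bool) \<Rightarrow> bool" where
  "simple_graph V E \<longleftrightarrow> finite V \<and> (\<forall>u v. E u v \<longrightarrow> E v u) \<and> (\<forall>v. \<not> E v v)
     \<and> (\<forall>u v. E u v \<longrightarrow> u \<in> V \<and> v \<in> V)"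

definition gram :: "('a \<Rightarrow> 'a \<Rightarrow> bool) \<Rightarrow> 'a \<Rightarrow> 'a \<Rightarrow> 'b::comm_ring_1" where
  "gram E u v = (if u = v then - 2 else if E u v then 1 else 0)"

text \<open>The bilinear form of the lattice ZS (S a set of vertices), on coefficient vectors
  (only the values on S matter).  Used with 'b = int (ZS) and 'b = real (ZS tensor R).\<close>
definition gform :: "('a \<Rightarrow> 'a \<Rightarrow> bool) \<Rightarrow> 'a set \<Rightarrow> ('a \<Rightarrow> 'b::comm_ring_1) \<Rightarrow> ('a \<Rightarrow> 'b) \<Rightarrow> 'b" where
  "gform E S x y = (\<Sum>u\<in>S. \<Sum>v\<in>S. x u * y v * gram E u v)"

definition neg_semidef :: "('a \<Rightarrow> 'a \<Rightarrow> bool) \<Rightarrow> 'a set \<Rightarrow> bool" where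
  "neg_semidef E S \<longleftrightarrow> (\<forall>x :: 'a \<Rightarrow> real. gform E S x x \<le> 0)"

definition degenerate :: "('a \<Rightarrow> 'a \<Rightarrow> bool) \<Rightarrow> 'a set \<Rightarrow> bool" where
  "degenerate E S \<longleftrightarrow> (\<exists>x :: 'a \<Rightarrow> real. (\<exists>v\<in>S. x v \<noteq> 0) \<and> (\<forall>y. gform E S x y = 0))"

definition neg_def :: "('a \<Rightarrow> 'a \<Rightarrow> bool) \<Rightarrow> 'a set \<Rightarrow> bool" where
  "neg_def E S \<longleftrightarrow> (\<forall>x :: 'a \<Rightarrow> real. (\<exists>v\<in>S. x v \<noteq> 0) \<longrightarrow> gform E S x x < 0)"

definition parabolic_graph :: "'a set \<Rightarrow> ('a \<Rightarrow> 'a \<Rightarrow> bool) \<Rightarrow> bool" where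
  "parabolic_graph V E \<longleftrightarrow> neg_semidef E V \<and> degenerate E V"

definition component :: "'a set \<Rightarrow> ('a \<Rightarrow> 'a \<Rightarrow> bool) \<Rightarrow> 'a set \<Rightarrow> bool" where
  "component V E C \<longleftrightarrow>
     (\<exists>v\<in>V. C = {u \<in> V. (\<lambda>a b. a \<in> V \<and> b \<in> V \<and> E a b)\<^sup>*\<^sup>* v u})"

definition elliptic_component :: "'a set \<Rightarrow> ('a \<Rightarrow> 'a \<Rightarrow> bool) \<Rightarrow> 'a set \<Rightarrow> bool" where
  "elliptic_component V E C \<longleftrightarrow> component V E C \<and> neg_def E C"

definition parabolic_component :: "'a set \<Rightarrow> ('a \<Rightarrow> 'a \<Rightarrow> bool) \<Rightarrow> 'a set \<Rightarrow> bool" where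
  "parabolic_component V E C \<longleftrightarrow> component V E C \<and> neg_semidef E C \<and> degenerate E C"

definition lattice_ker :: "('a \<Rightarrow> 'a \<Rightarrow> bool) \<Rightarrow> 'a set \<Rightarrow> ('a \<Rightarrow> int) set" where
  "lattice_ker E S = {x. \<forall>y. gform E S x y = 0}"

definition is_degree :: "('a \<Rightarrow> 'a \<Rightarrow> bool) \<Rightarrow> 'a set \<Rightarrow> int \<Rightarrow> bool" where
  "is_degree E S d \<longleftrightarrow> (\<exists>k. k \<in> lattice_ker E S \<and> (\<forall>v\<in>S. k v > 0)
      \<and> (\<forall>x\<in>lattice_ker E S. \<exists>m::int. \<forall>v\<in>S. x v = m * k v)
      \<and> d = (\<Sum>v\<in>S. k v))"

definition degree_set :: "('a \<Rightarrow> 'a \<Rightarrow> bool) \<Rightarrow> 'a set \<Rightarrow> int set" where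
  "degree_set E S = {(\<Sum>v\<in>S. x v) | x. gform E S x x = - 2 \<and> (\<forall>v\<in>S. x v \<ge> 0)}"

text \<open>Elements of ZGamma + Zh are pairs (x, n) standing for sum x_v v + n h.  F_h(Gamma) is the quotient by the kernel
  of this form; the form descends to the quotient.\<close>
definition fh :: "'a set \<Rightarrow> ('a \<Rightarrow> 'a \<Rightarrow> bool) \<Rightarrow> int \<Rightarrow> ('a \<Rightarrow> int) \<times> int \<Rightarrow> ('a \<Rightarrow> int) \<times> int \<Rightarrow> int" where
  "fh V E D e f = gform E V (fst e) (fst f) + snd e * (\<Sum>v\<in>V. fst f v)
      + snd f * (\<Sum>v\<in>V. fst e v) + 2 * D * snd e * snd f"

definition hvec :: "('a \<Rightarrow> int) \<times> int" where
  "hvec = ((\<lambda>_. 0), 1)"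

definition vvec :: "'a \<Rightarrow> ('a \<Rightarrow> int) \<times> int" where
  "vvec v = ((\<lambda>w. if w = v then 1 else 0), 0)"

definition fh_class :: "'a set \<Rightarrow> ('a \<Rightarrow> 'a \<Rightarrow> bool) \<Rightarrow> int \<Rightarrow> ('a \<Rightarrow> int) \<times> int
     \<Rightarrow> (('a \<Rightarrow> int) \<times> int) set" where
  "fh_class V E D e = {e'. \<forall>f. fh V E D e' f = fh V E D e f}"

text \<open>Positive inertia index exactly 1: some vector of positive square, and no
  positive definite rank-2 sublattice.\<close>
definition pos_inertia_one :: "'a set \<Rightarrow> ('a \<Rightarrow> 'a \<Rightarrow> bool) \<Rightarrow> int \<Rightarrow> bool" where
  "pos_inertia_one V E D \<longleftrightarrow> (\<exists>e. fh V E D e e > 0) \<and>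
     \<not> (\<exists>e f. fh V E D e e > 0 \<and> fh V E D e e * fh V E D f f - (fh V E D e f)^2 > 0)"

text \<open>Admissibility of F_h(Gamma) (conditions are stated on representatives; they
  are invariant under passing to the quotient by the kernel).\<close>
definition admissible :: "'a set \<Rightarrow> ('a \<Rightarrow> 'a \<Rightarrow> bool) \<Rightarrow> int \<Rightarrow> bool" where
  "admissible V E D \<longleftrightarrow> pos_inertia_one V E D
     \<and> \<not> (\<exists>e. fh V E D e e = - 2 \<and> fh V E D e hvec = 0)
     \<and> \<not> (\<exists>e. fh V E D e e = 0 \<and> fh V E D e hvec = 2)"

definition fh_lines :: "'a set \<Rightarrow> ('a \<Rightarrow> 'a \<Rightarrow> bool) \<Rightarrow> int \<Rightarrow> (('a \<Rightarrow> int) \<times> int) set set" where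
  "fh_lines V E D = {fh_class V E D e | e. fh V E D e e = - 2 \<and> fh V E D e hvec = 1}"

definition saturated :: "'a set \<Rightarrow> ('a \<Rightarrow> 'a \<Rightarrow> bool) \<Rightarrow> int \<Rightarrow> bool" where
  "saturated V E D \<longleftrightarrow> bij_betw (\<lambda>v. fh_class V E D (vvec v)) V (fh_lines V E D)
     \<and> (\<forall>u\<in>V. \<forall>v\<in>V. E u v \<longleftrightarrow> fh V E D (vvec u) (vvec v) = 1)"

end

theory Submission
  imports Defs
begin

text \<open>Let \<open>k\<close> span the kernel of the parabolic component \<open>C\<close> and let \<open>r\<close> be a positive root of
  the elliptic component \<open>\<Sigma>\<close>. Since distinct components are orthogonal, \<open>e = k - r\<close> pairs with
  every vertex as \<open>-r\<close> does, so \<open>e\<^sup>2 = r\<^sup>2 = -2\<close> and \<open>e\<cdot>h = deg k - deg r\<close>. If \<open>deg r = d\<close>, then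
  \<open>e\<close> is a \<open>(-2)\<close>-vector orthogonal to \<open>h\<close>, which admissibility forbids. If \<open>deg r = d - 1\<close>,
  then \<open>e\<close> is a line; saturation makes it a vertex \<open>v\<close>, so \<open>v\<close> and \<open>-r\<close> define the same
  functional on \<open>\<int>\<Gamma>\<close>. For \<open>v \<notin> \<Sigma>\<close> this contradicts \<open>v\<^sup>2 = -2\<close>, and for \<open>v \<in> \<Sigma>\<close> the
  nonzero vector \<open>r + v \<in> \<int>\<Sigma>\<close> lies in the kernel, contradicting definiteness.\<close>

lemma gform_cong:
  assumes "\<forall>u\<in>A. x u = x' u" "\<forall>u\<in>A. y u = y' u"
  shows "gform E A x y = gform E A x' y'"
  unfolding gform_def using assms by (intro sum.cong) auto

lemma gform_add_left: "gform E A (\<lambda>u. x u + y u) z = gform E A x z + gform E A y z"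
  unfolding gform_def by (simp add: algebra_simps sum.distrib)

lemma gform_diff_left: "gform E A (\<lambda>u. x u - y u) z = gform E A x z - gform E A y z"
  unfolding gform_def by (simp add: algebra_simps sum_subtractf)

lemma gform_minus_right: "gform E A x (\<lambda>u. - y u) = - gform E A x y"
  unfolding gform_def by (simp add: sum_negf)

lemma gform_zero_right: "\<forall>u\<in>A. y u = 0 \<Longrightarrow> gform E A x y = 0"
  unfolding gform_def by simp

lemma gform_of_int:
  "gform E A (\<lambda>u. real_of_int (x u)) (\<lambda>u. of_int (y u)) = of_int (gform E A x y)"
  unfolding gform_def gram_def by simp (intro sum.cong refl, auto)

lemma neg_def_isotropic_imp_zero:
  assumes "neg_def E S" "gform E S x x = (0::int)"
  shows "\<forall>v\<in>S. x v = 0"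
proof (rule ccontr)
  assume "\<not> (\<forall>v\<in>S. x v = 0)"
  then have "gform E S (\<lambda>u. real_of_int (x u)) (\<lambda>u. of_int (x u)) < 0"
    using assms(1) unfolding neg_def_def by auto
  with assms(2) show False by (simp add: gform_of_int)
qed

lemma component_subset: "component V E A \<Longrightarrow> A \<subseteq> V"
  unfolding component_def by auto

lemma component_edge_closed:
  assumes "simple_graph V E" "component V E A" "E x y"
  shows "x \<in> A \<longleftrightarrow> y \<in> A"
proof -
  obtain a where a: "A = {u \<in> V. (\<lambda>a b. a \<in> V \<and> b \<in> V \<and> E a b)\<^sup>*\<^sup>* a u}"
    using assms(2) unfolding component_def by blast
  have "E y x" "x \<in> V" "y \<in> V" using assms(1,3) unfolding simple_graph_def by blast+
  with a assms(3) show ?thesis by (auto intro: rtranclp.rtrancl_into_rtrancl)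
qed

lemma component_gram_eq_0:
  assumes "simple_graph V E" "component V E A" "u \<in> A" "v \<notin> A"
  shows "gram E u v = (0::'b::comm_ring_1)"
  using component_edge_closed[OF assms(1,2)] assms(3,4) unfolding gram_def by fastforce

lemma component_subset_of_meet:
  assumes "simple_graph V E" "component V E A" "component V E B" "z \<in> A" "z \<in> B"
  shows "A \<subseteq> B"
proof -
  let ?R = "\<lambda>a b. a \<in> V \<and> b \<in> V \<and> E a b"
  obtain a where a: "A = {u \<in> V. ?R\<^sup>*\<^sup>* a u}"
    using assms(2) unfolding component_def by blast
  have closed: "?R\<^sup>*\<^sup>* x y \<Longrightarrow> x \<in> B \<longleftrightarrow> y \<in> B" for x y
    by (induction rule: rtranclp_induct) (use component_edge_closed[OF assms(1,3)] in auto)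
  have "a \<in> B" using closed assms(4,5) a by blast
  then show ?thesis using closed a by blast
qed

lemma elliptic_parabolic_components_disjoint:
  assumes "simple_graph V E" "parabolic_component V E C" "elliptic_component V E S"
  shows "C \<inter> S = {}"
proof (rule ccontr)
  have C: "component V E C" and S: "component V E S"
    using assms(2,3) unfolding parabolic_component_def elliptic_component_def by auto
  assume "C \<inter> S \<noteq> {}"
  then have "C = S"
    using component_subset_of_meet[OF assms(1) C S] component_subset_of_meet[OF assms(1) S C]
    by blast
  moreover obtain x :: "'a \<Rightarrow> real" where "\<exists>v\<in>C. x v \<noteq> 0" "\<forall>y. gform E C x y = 0"
    using assms(2) unfolding parabolic_component_def degenerate_def by blast
  ultimately show False
    using assms(3) unfolding elliptic_component_def neg_def_def by force
qed

lemma gform_supported_on_component: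
  assumes "simple_graph V E" "component V E A" "\<forall>u. u \<notin> A \<longrightarrow> x u = 0"
  shows "gform E V x y = gform E A x y"
proof -
  have fin: "finite V" using assms(1) unfolding simple_graph_def by blast
  have AV: "A \<subseteq> V" using assms(2) by (rule component_subset)
  have "gform E V x y = (\<Sum>u\<in>A. \<Sum>v\<in>V. x u * y v * gram E u v)"
    unfolding gform_def by (rule sum.mono_neutral_right) (use assms fin AV in auto)
  also have "\<dots> = gform E A x y"
    unfolding gform_def
  proof (rule sum.cong[OF refl])
    fix u assume "u \<in> A"
    then show "(\<Sum>v\<in>V. x u * y v * gram E u v) = (\<Sum>v\<in>A. x u * y v * gram E u v)"
      using fin AV by (intro sum.mono_neutral_right) (auto simp: component_gram_eq_0[OF assms(1,2)])
  qed
  finally show ?thesis .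
qed

definition zero_ext :: "'a set \<Rightarrow> ('a \<Rightarrow> 'b::zero) \<Rightarrow> 'a \<Rightarrow> 'b" where
  "zero_ext A x u = (if u \<in> A then x u else 0)"

definition basis_vec :: "'a \<Rightarrow> 'a \<Rightarrow> int" where
  "basis_vec v w = (if w = v then 1 else 0)"

lemma gform_zero_ext_component:
  assumes "simple_graph V E" "component V E A"
  shows "gform E V (zero_ext A x) y = gform E A x y"
proof -
  have "gform E V (zero_ext A x) y = gform E A (zero_ext A x) y"
    using assms by (rule gform_supported_on_component) (simp add: zero_ext_def)
  also have "\<dots> = gform E A x y"
    by (rule gform_cong) (auto simp: zero_ext_def)
  finally show ?thesis .
qed

lemma sum_zero_ext: "finite V \<Longrightarrow> A \<subseteq> V \<Longrightarrow> sum (zero_ext A x) V = sum x A"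
  unfolding zero_ext_def by (simp add: sum.inter_restrict[symmetric] Int_absorb1)

lemma gform_basis_vec_self:
  assumes "finite V" "v \<in> V"
  shows "gform E V (basis_vec v) (basis_vec v) = -2"
  using assms
  by (simp add: gform_def basis_vec_def gram_def if_distrib if_distribR sum.If_cases)

lemma vvec_eq_basis_vec: "vvec v = (basis_vec v, 0)"
  unfolding vvec_def basis_vec_def ..

lemma fh_ZGamma: "fh V E D (x, 0) (y, 0) = gform E V x y"
  by (simp add: fh_def)

lemma fh_ZGamma_hvec: "fh V E D (x, 0) hvec = sum x V"
  by (simp add: fh_def hvec_def gform_zero_right)

lemma kernel_minus_root:
  assumes "simple_graph V E" "component V E C" "component V E S" "C \<inter> S = {}"
    and "k \<in> lattice_ker E C" "gform E S r r = -2"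
  defines "e \<equiv> \<lambda>u. zero_ext C k u - zero_ext S r u"
  shows "gform E V e y = - gform E S r y"
    and "gform E V e e = -2"
    and "sum e V = sum k C - sum r S"
proof -
  have k: "gform E C k y = 0" for y using assms(5) unfolding lattice_ker_def by simp
  show pairing: "gform E V e y = - gform E S r y" for y
    unfolding e_def
    by (simp add: gform_diff_left gform_zero_ext_component[OF assms(1)] assms(2,3) k)
  have "gform E S r e = gform E S r (\<lambda>u. - r u)"
    by (rule gform_cong) (use assms(4) in \<open>auto simp: e_def zero_ext_def\<close>)
  then show "gform E V e e = -2"
    using assms(6) by (simp add: pairing gform_minus_right)
  have "finite V" using assms(1) unfolding simple_graph_def by blast
  then show "sum e V = sum k C - sum r S"
    unfolding e_def using component_subset[OF assms(2)] component_subset[OF assms(3)]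
    by (simp add: sum_subtractf sum_zero_ext)
qed

lemma saturated_line_is_vertex:
  assumes "saturated V E D" "fh V E D e e = -2" "fh V E D e hvec = 1"
  obtains v where "v \<in> V" "\<And>f. fh V E D e f = fh V E D (vvec v) f"
proof -
  have "fh_class V E D e \<in> fh_lines V E D" using assms(2,3) unfolding fh_lines_def by blast
  also have "fh_lines V E D = (\<lambda>v. fh_class V E D (vvec v)) ` V"
    using assms(1) unfolding saturated_def bij_betw_def by simp
  finally obtain v where v: "v \<in> V" "fh_class V E D (vvec v) = fh_class V E D e"
    by (auto simp: eq_commute)
  have "e \<in> fh_class V E D e" unfolding fh_class_def by simp
  then have "e \<in> fh_class V E D (vvec v)" using v(2) by simp
  with v(1) that show ?thesis unfolding fh_class_def by blast
qed

text \<open>Nonnegativity of \<open>r\<close> is used only to rule out \<open>r = -v\<close>.\<close>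

lemma basis_vec_pairing_ne_minus_nonneg:
  assumes "simple_graph V E" "elliptic_component V E S" "v \<in> V" "\<forall>w\<in>S. r w \<ge> 0"
    and pairing: "\<And>y. gform E V (basis_vec v) y = - gform E S r y"
  shows False
proof (cases "v \<in> S")
  case False
  have "gform E S r (basis_vec v) = 0"
    by (rule gform_zero_right) (use False in \<open>auto simp: basis_vec_def\<close>)
  moreover have "finite V" using assms(1) unfolding simple_graph_def by blast
  ultimately show False
    using pairing[of "basis_vec v"] gform_basis_vec_self[OF _ assms(3)] by simp
next
  case True
  have S: "component V E S" "neg_def E S"
    using assms(2) unfolding elliptic_component_def by auto
  define x where "x = (\<lambda>u. r u + basis_vec v u)"
  have "gform E S (basis_vec v) y = gform E V (basis_vec v) y" for y
    by (rule gform_supported_on_component[OF assms(1) S(1), symmetric])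
       (use True in \<open>simp add: basis_vec_def\<close>)
  then have "gform E S (basis_vec v) y = - gform E S r y" for y
    by (simp add: pairing)
  then have "gform E S x x = 0"
    unfolding x_def by (simp add: gform_add_left)
  moreover have "x v \<noteq> 0"
  proof -
    have "r v \<ge> 0" using assms(4) True by blast
    then show ?thesis by (simp add: x_def basis_vec_def)
  qed
  ultimately show False using neg_def_isotropic_imp_zero[OF S(2)] True by blast
qed

lemma kernel_minus_root_in_fh:
  assumes "simple_graph V E" "parabolic_component V E C" "is_degree E C d"
    and "elliptic_component V E S" "gform E S r r = -2"
  obtains e where "fh V E D (e, 0) (e, 0) = -2" "fh V E D (e, 0) hvec = d - sum r S"
    "\<And>y. gform E V e y = - gform E S r y"
proof -
  obtain k where k: "k \<in> lattice_ker E C" "d = sum k C"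
    using assms(3) unfolding is_degree_def by blast
  have "component V E C" "component V E S"
    using assms(2,4) unfolding parabolic_component_def elliptic_component_def by auto
  note e = kernel_minus_root[OF assms(1) this
      elliptic_parabolic_components_disjoint[OF assms(1,2,4)] k(1) assms(5)]
  show ?thesis by (rule that) (use e k(2) in \<open>simp_all add: fh_ZGamma fh_ZGamma_hvec\<close>)
qed

lemma degree_notin_degree_set_elliptic:
  assumes "simple_graph V E" "admissible V E D" "parabolic_component V E C" "is_degree E C d"
    and "elliptic_component V E S"
  shows "d \<notin> degree_set E S"
proof
  assume "d \<in> degree_set E S"
  then obtain r where r: "d = sum r S" "gform E S r r = -2"
    unfolding degree_set_def by blast
  obtain e where "fh V E D (e, 0) (e, 0) = -2" "fh V E D (e, 0) hvec = d - sum r S"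
    using kernel_minus_root_in_fh[OF assms(1,3,4,5) r(2)] by blast
  with r(1) assms(2) show False unfolding admissible_def by auto
qed

lemma degree_minus_one_notin_degree_set_elliptic:
  assumes "simple_graph V E" "saturated V E D" "parabolic_component V E C" "is_degree E C d"
    and "elliptic_component V E S"
  shows "d - 1 \<notin> degree_set E S"
proof
  assume "d - 1 \<in> degree_set E S"
  then obtain r where r: "d - 1 = sum r S" "gform E S r r = -2" "\<forall>v\<in>S. r v \<ge> 0"
    unfolding degree_set_def by blast
  obtain e where e: "fh V E D (e, 0) (e, 0) = -2" "fh V E D (e, 0) hvec = d - sum r S"
    "\<And>y. gform E V e y = - gform E S r y"
    using kernel_minus_root_in_fh[OF assms(1,3,4,5) r(2)] by blast
  have line: "fh V E D (e, 0) hvec = 1" using e(2) r(1) by simp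
  obtain v where v: "v \<in> V" "\<And>f. fh V E D (e, 0) f = fh V E D (vvec v) f"
    using saturated_line_is_vertex[OF assms(2) e(1) line] by blast
  have "gform E V (basis_vec v) y = gform E V e y" for y
    using v(2)[of "(y, 0)"] by (simp add: vvec_eq_basis_vec fh_ZGamma)
  then have "gform E V (basis_vec v) y = - gform E S r y" for y
    using e(3) by simp
  then show False
    using basis_vec_pairing_ne_minus_nonneg[OF assms(1,5) v(1) r(3)] by blast
qed

theorem corollary3p4:
  fixes V :: "'a set" and E :: "'a \<Rightarrow> 'a \<Rightarrow> bool" and D d :: int and C S :: "'a set"
  assumes "simple_graph V E"
    and "D \<ge> 2"
    and "parabolic_graph V E"
    and "admissible V E D"
    and "parabolic_component V E C"
    and "is_degree E C d"
    and "elliptic_component V E S"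
  shows "d \<notin> degree_set E S \<and> (saturated V E D \<longrightarrow> d - 1 \<notin> degree_set E S)"
  using degree_notin_degree_set_elliptic[OF assms(1,4-7)]
    degree_minus_one_notin_degree_set_elliptic[OF assms(1) _ assms(5-7)]
  by blast

end
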